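(* Let $\mathcal A\in\mathbb C^{n_1\times n_2\times n_3}$, $\mathcal A^-\in\mathcal A\{1\}$ and $\mathcal X\in\mathbb C^{n_2\times n_1\times n_3}$. The following are equivalent: (a) $\mathcal X=\mathcal A^-\mathcal A\mathcal A^*$; (b) $\mathcal X(\mathcal A^\dagger)^*\mathcal X=\mathcal X$, $(\mathcal A^\dagger)^*\mathcal X(\mathcal A^\dagger)^*=(\mathcal A^\dagger)^*$, $\mathcal A\mathcal X=\mathcal A\mathcal A^*$ and $\mathcal X(\mathcal A^\dagger)^*=\mathcal A^-\mathcal A$; (c) $\mathcal X(\mathcal A^\dagger)^*\mathcal X=\mathcal X$, $(\mathcal A^\dagger)^*\mathcal X(\mathcal A^\dagger)^*=(\mathcal A^\dagger)^*$, $(\mathcal A^\dagger)^*\mathcal X=\mathcal A\mathcal A^\dagger$ and $\mathcal X(\mathcal A^\dagger)^*=\mathcal A^-\mathcal A$; (d) $\mathcal X(\mathcal A^\dagger)^*\mathcal X=\mathcal X$, $(\mathcal A^\dagger)^*\mathcal X=\mathcal A\mathcal A^\dagger$ and $\mathcal X(\mathcal A^\dagger)^*=\mathcal A^-\mathcal A$; (e) $\mathcal A^-\mathcal A\mathcal X=\mathcal X$ and $\mathcal A\mathcal X=\mathcal A\mathcal A^*$.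
   Context: Fix a nonsingular matrix $M\in\mathbb C^{n_3\times n_3}$. For $\mathcal C\in\mathbb C^{n_1\times n_2\times n_3}$ let $\widehat{\mathcal C}=\mathcal C\times_3M$, i.e. $\widehat{\mathcal C}_{ijk}=\sum_{l=1}^{n_3}M_{kl}\mathcal C_{ijl}$, and let $\widehat{\mathcal C}^{(i)}$ denote its $i$-th frontal slice. The M-product $\mathcal C\star_M\mathcal D$ of $\mathcal C\in\mathbb C^{n_1\times n_2\times n_3}$ and $\mathcal D\in\mathbb C^{n_2\times l\times n_3}$ is the unique tensor with $\widehat{\mathcal C\star_M\mathcal D}^{(i)}=\widehat{\mathcal C}^{(i)}\widehat{\mathcal D}^{(i)}$ for all $i\in[n_3]$. Juxtaposition of tensors denotes the M-product. The conjugate transpose $\mathcal A^*$ is defined by $\widehat{\mathcal A^*}^{(i)}=(\widehat{\mathcal A}^{(i)})^*$. The Moore–Penrose inverse $\mathcal A^\dagger$ is the unique $\mathcal W$ satisfying $\mathcal A\mathcal W\mathcal A=\mathcal A$, $\mathcal W\mathcal A\mathcal W=\mathcal W$, $(\mathcal A\mathcal W)^*=\mathcal A\mathcal W$, $(\mathcal W\mathcal A)^*=\mathcal W\mathcal A$. $\mathcal A\{1\}$ is the set of all $\mathcal W$ with $\mathcal A\mathcal W\mathcal A=\mathcal A$. *)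

theory Defs
  imports "HOL-Analysis.Analysis"
begin

text \<open>A third-order tensor in C^(n1 x n2 x n3) is represented by its frontal slices:
  an element of type (complex^'n2^'n1)^'n3, i.e. C $ k $ i $ j = C_{ijk}.
  The dimensions n1, n2, n3 are the cardinalities of the finite index types.\<close>

type_synonym ('n1, 'n2, 'n3) tensor = "(complex^'n2^'n1)^'n3"

definition tensor_hat :: "complex^'n3^'n3 \<Rightarrow> ('n1::finite,'n2::finite,'n3::finite) tensor
    \<Rightarrow> ('n1,'n2,'n3) tensor" where
  "tensor_hat M C = (\<chi> k. \<chi> i j. \<Sum>l\<in>UNIV. M $ k $ l * C $ l $ i $ j)"

definition cmat_adj :: "complex^'n^'m \<Rightarrow> complex^'m^'n" where
  "cmat_adj A = (\<chi> i j. cnj (A $ j $ i))"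

definition mprod :: "complex^'n3^'n3 \<Rightarrow> ('n1::finite,'n2::finite,'n3::finite) tensor
    \<Rightarrow> ('n2,'l::finite,'n3) tensor \<Rightarrow> ('n1,'l,'n3) tensor" where
  "mprod M C D = (THE Z. \<forall>k. tensor_hat M Z $ k = tensor_hat M C $ k ** tensor_hat M D $ k)"

definition tadj :: "complex^'n3^'n3 \<Rightarrow> ('n1::finite,'n2::finite,'n3::finite) tensor
    \<Rightarrow> ('n2,'n1,'n3) tensor" where
  "tadj M A = (THE Z. \<forall>k. tensor_hat M Z $ k = cmat_adj (tensor_hat M A $ k))"

definition tpinv :: "complex^'n3^'n3 \<Rightarrow> ('n1::finite,'n2::finite,'n3::finite) tensor
    \<Rightarrow> ('n2,'n1,'n3) tensor" where
  "tpinv M A = (THE W. mprod M (mprod M A W) A = A \<and> mprod M (mprod M W A) W = W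
      \<and> tadj M (mprod M A W) = mprod M A W \<and> tadj M (mprod M W A) = mprod M W A)"

definition tinner :: "complex^'n3^'n3 \<Rightarrow> ('n1::finite,'n2::finite,'n3::finite) tensor
    \<Rightarrow> ('n2,'n1,'n3) tensor set" where
  "tinner M A = {W. mprod M (mprod M A W) A = A}"

end

theory Submission
  imports Defs
begin

text \<open>Since \<open>M\<close> is invertible, the transform \<open>C \<mapsto> C \<times>\<^sub>3 M\<close> is a bijection that turns the
  M-product and the adjoint into the slicewise matrix product and conjugate transpose. Hence the
  tensors behave like matrices: the product is associative, the adjoint reverses products, and
  the Moore-Penrose inverse exists because it exists slice by slice. The theorem is then pure
  algebra in the Penrose equations: each of (b)-(e) forces \<open>A\<^sup>-A X = X\<close> and \<open>A X = A A\<^sup>*\<close>,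
  so \<open>X = A\<^sup>-(A X) = A\<^sup>-A A\<^sup>*\<close>, while \<open>A\<^sup>-A A\<^sup>*\<close> satisfies all listed equations because
  \<open>A\<^sup>* (A\<^sup>\<dagger>)\<^sup>* = A\<^sup>\<dagger>A\<close>, \<open>(A\<^sup>\<dagger>)\<^sup>* A\<^sup>* = A A\<^sup>\<dagger>\<close> and \<open>(A\<^sup>\<dagger>)\<^sup>* A\<^sup>-A = (A\<^sup>\<dagger>)\<^sup>*\<close>.\<close>

section \<open>Conjugate transpose and Moore-Penrose inverses of matrices\<close>

lemma cmat_adj_mult: "cmat_adj (A ** B) = cmat_adj B ** cmat_adj (A::complex^_^_)"
  unfolding cmat_adj_def by (simp add: vec_eq_iff matrix_matrix_mult_def mult.commute)

lemma cmat_adj_cmat_adj [simp]: "cmat_adj (cmat_adj A) = A"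
  unfolding cmat_adj_def by (simp add: vec_eq_iff)

lemma cmat_adj_diff: "cmat_adj (A - B) = cmat_adj A - cmat_adj B"
  unfolding cmat_adj_def by (simp add: vec_eq_iff)

lemma matrix_diff_ldistrib: "(A::'a::ring_1^'n^'m) ** (B - C) = A ** B - A ** C"
  by (simp add: vec_eq_iff matrix_matrix_mult_def sum_subtractf algebra_simps)

lemma matrix_diff_rdistrib: "(B - C) ** (A::'a::ring_1^'n^'m) = B ** A - C ** A"
  by (simp add: vec_eq_iff matrix_matrix_mult_def sum_subtractf algebra_simps)

lemma cmat_adj_mult_self_eq_0_iff: "cmat_adj E ** E = 0 \<longleftrightarrow> (E::complex^'n^'m) = 0"
proof
  assume E: "cmat_adj E ** E = 0"
  have "E $ i $ j = 0" for i j
  proof -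
    have "(cmat_adj E ** E) $ j $ j = (\<Sum>l\<in>UNIV. E $ l $ j * cnj (E $ l $ j))"
      by (simp add: matrix_matrix_mult_def cmat_adj_def mult.commute)
    also have "\<dots> = of_real (\<Sum>l\<in>UNIV. (norm (E $ l $ j))\<^sup>2)"
      by (simp only: complex_norm_square of_real_sum)
    finally have "(cmat_adj E ** E) $ j $ j = of_real (\<Sum>l\<in>UNIV. (norm (E $ l $ j))\<^sup>2)" .
    then have "(\<Sum>l\<in>UNIV. (norm (E $ l $ j))\<^sup>2) = 0"
      using E by (metis of_real_eq_0_iff zero_index)
    then show ?thesis
      by (simp add: sum_nonneg_eq_0_iff)
  qed
  then show "E = 0" by (simp add: vec_eq_iff)
qed simp

lemma ex_matrix_inner_inverse:
  fixes A :: "'a::field^'n^'m"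
  shows "\<exists>G. A ** G ** A = A"
proof -
  obtain g where g: "Vector_Spaces.linear (*s) (*s) g" "\<forall>v\<in>range ((*v) A). A *v g v = v"
    using vec.linear_exists_right_inverse_on[OF matrix_vector_mul_linear_gen[of A], of UNIV]
    by auto
  have "A ** matrix g ** A = A"
    unfolding matrix_eq by (simp add: matrix_vector_mul_assoc[symmetric] matrix_works[OF g(1)] g(2))
  then show ?thesis by blast
qed

text \<open>A \<open>{1,3}\<close>-inverse is \<open>(A\<^sup>*A)\<^sup>- A\<^sup>*\<close> for any inner inverse \<open>(A\<^sup>*A)\<^sup>-\<close>: the error
  \<open>E = (A\<^sup>*A)\<^sup>-A\<^sup>*A - A\<close> satisfies \<open>A\<^sup>*E = 0\<close>, hence \<open>E\<^sup>*E = 0\<close>.\<close>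

lemma ex_matrix_13_inverse:
  fixes A :: "complex^'n^'m"
  shows "\<exists>T. A ** T ** A = A \<and> cmat_adj (A ** T) = A ** T"
proof -
  define H where "H = cmat_adj A ** A"
  obtain Hm where Hm: "H ** Hm ** H = H"
    using ex_matrix_inner_inverse by blast
  define T where "T = Hm ** cmat_adj A"
  define E where "E = A ** T ** A - A"
  have "cmat_adj A ** E = 0"
    using Hm by (simp add: E_def T_def H_def matrix_diff_ldistrib matrix_mul_assoc)
  then have "cmat_adj E ** E = 0"
    by (simp add: E_def cmat_adj_diff cmat_adj_mult matrix_diff_rdistrib matrix_mul_assoc[symmetric])
  then have ATA: "A ** T ** A = A"
    by (simp add: cmat_adj_mult_self_eq_0_iff E_def)
  then have "cmat_adj A ** cmat_adj (A ** T) = cmat_adj A"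
    by (metis cmat_adj_mult)
  then have "A ** T = A ** Hm ** (cmat_adj A ** cmat_adj (A ** T))"
    by (simp add: T_def matrix_mul_assoc)
  also have "\<dots> = cmat_adj (A ** T)"
    using ATA by (simp add: T_def cmat_adj_mult matrix_mul_assoc)
  finally show ?thesis using ATA by metis
qed

text \<open>Urquhart's construction: \<open>U A T\<close> with \<open>T \<in> A{1,3}\<close> and \<open>U \<in> A{1,4}\<close>.\<close>

lemma ex_matrix_Moore_Penrose:
  fixes A :: "complex^'n^'m"
  shows "\<exists>G. A ** G ** A = A \<and> G ** A ** G = G \<and> cmat_adj (A ** G) = A ** G
     \<and> cmat_adj (G ** A) = G ** A"
proof -
  obtain T where T: "A ** T ** A = A" "cmat_adj (A ** T) = A ** T"
    using ex_matrix_13_inverse by blast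
  obtain S where S: "cmat_adj A ** S ** cmat_adj A = cmat_adj A"
      "cmat_adj (cmat_adj A ** S) = cmat_adj A ** S"
    using ex_matrix_13_inverse by blast
  define U where "U = cmat_adj S"
  have U: "A ** U ** A = A" "cmat_adj (U ** A) = U ** A"
    using arg_cong[OF S(1), of cmat_adj] S(2) by (simp_all add: U_def cmat_adj_mult matrix_mul_assoc)
  define G where "G = U ** A ** T"
  have "A ** G = A ** T" "G ** A = U ** A"
    using U(1) T(1) by (metis G_def matrix_mul_assoc)+
  then show ?thesis
    using T U by (metis G_def matrix_mul_assoc)
qed

section \<open>The transform and the M-product\<close>

lemma tensor_hat_tensor_hat: "tensor_hat M (tensor_hat N C) = tensor_hat (M ** N) C"
proof -
  have "(\<Sum>l\<in>UNIV. M $ k $ l * (\<Sum>m\<in>UNIV. N $ l $ m * C $ m $ i $ j))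
     = (\<Sum>m\<in>UNIV. (\<Sum>l\<in>UNIV. M $ k $ l * N $ l $ m) * C $ m $ i $ j)" for k i j
    by (simp add: sum_distrib_left sum_distrib_right mult.assoc) (rule sum.swap)
  then show ?thesis by (simp add: vec_eq_iff matrix_matrix_mult_def tensor_hat_def)
qed

lemma tensor_hat_mat_1 [simp]: "tensor_hat (mat 1) C = C"
  by (simp add: vec_eq_iff mat_def tensor_hat_def if_distrib[of "\<lambda>x. x * _"] cong: if_cong)

locale m_product =
  fixes M :: "complex^'n3::finite^'n3"
  assumes invertible_M: "invertible M"
begin

abbreviation mp :: "('n1::finite,'n2::finite,'n3) tensor \<Rightarrow> ('n2,'l::finite,'n3) tensor
    \<Rightarrow> ('n1,'l,'n3) tensor" (infixl "\<star>" 70)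
  where "C \<star> D \<equiv> mprod M C D"

abbreviation adj :: "('n1::finite,'n2::finite,'n3) tensor \<Rightarrow> ('n2,'n1,'n3) tensor"
    ("_\<^sup>H" [1000] 999)
  where "A\<^sup>H \<equiv> tadj M A"

abbreviation pinv :: "('n1::finite,'n2::finite,'n3) tensor \<Rightarrow> ('n2,'n1,'n3) tensor"
    ("_\<^sup>\<dagger>" [1000] 999)
  where "A\<^sup>\<dagger> \<equiv> tpinv M A"

lemma bij_tensor_hat: "bij (tensor_hat M :: ('n1::finite,'n2::finite,'n3) tensor \<Rightarrow> _)"
proof -
  obtain N where "M ** N = mat 1" "N ** M = mat 1"
    using invertible_M invertible_def by blast
  then have "tensor_hat M (tensor_hat N C) = C" "tensor_hat N (tensor_hat M C) = C"
    for C :: "('n1,'n2,'n3) tensor"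
    by (simp_all add: tensor_hat_tensor_hat)
  then show ?thesis
    by (metis bijI' surj_def)
qed

lemma tensor_eq_iff_slices:
  "X = Y \<longleftrightarrow> (\<forall>k. tensor_hat M X $ k = tensor_hat M Y $ k)"
  using bij_tensor_hat by (metis bij_is_inj inj_eq vec_eq_iff)

lemma tensor_hat_THE:
  "tensor_hat M (THE Z. \<forall>k. tensor_hat M Z $ k = F k) $ k = F k"
proof -
  have "\<exists>!Z. tensor_hat M Z = (\<chi> k. F k)"
    using bij_tensor_hat[unfolded bij_iff] by blast
  then have "\<exists>!Z. \<forall>k. tensor_hat M Z $ k = F k"
    by (simp add: vec_eq_iff)
  then show ?thesis
    by (rule theI'[where P = "\<lambda>Z. \<forall>k. tensor_hat M Z $ k = F k", THEN spec])
qed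

lemma tensor_hat_mprod: "tensor_hat M (C \<star> D) $ k = tensor_hat M C $ k ** tensor_hat M D $ k"
  unfolding mprod_def by (rule tensor_hat_THE)

lemma tensor_hat_tadj: "tensor_hat M (A\<^sup>H) $ k = cmat_adj (tensor_hat M A $ k)"
  unfolding tadj_def by (rule tensor_hat_THE)

lemma mprod_assoc: "C \<star> D \<star> E = C \<star> (D \<star> E)"
  by (simp add: tensor_eq_iff_slices tensor_hat_mprod matrix_mul_assoc)

lemma tadj_mprod: "(C \<star> D)\<^sup>H = D\<^sup>H \<star> C\<^sup>H"
  by (simp add: tensor_eq_iff_slices tensor_hat_mprod tensor_hat_tadj cmat_adj_mult)

section \<open>The Moore-Penrose inverse of a tensor\<close>

lemma Penrose_unique:
  assumes "A \<star> W \<star> A = A" "W \<star> A \<star> W = W" "(A \<star> W)\<^sup>H = A \<star> W" "(W \<star> A)\<^sup>H = W \<star> A"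
    and "A \<star> V \<star> A = A" "V \<star> A \<star> V = V" "(A \<star> V)\<^sup>H = A \<star> V" "(V \<star> A)\<^sup>H = V \<star> A"
  shows "W = V"
proof -
  have AH_V: "A\<^sup>H = A\<^sup>H \<star> (A \<star> V)\<^sup>H"
    by (metis assms(5) tadj_mprod)
  have AH_W: "A\<^sup>H = (W \<star> A)\<^sup>H \<star> A\<^sup>H"
    by (metis assms(1) mprod_assoc tadj_mprod)
  have "W = W \<star> (A \<star> W)\<^sup>H"
    by (metis assms(2,3) mprod_assoc)
  also have "\<dots> = W \<star> W\<^sup>H \<star> A\<^sup>H \<star> (A \<star> V)\<^sup>H"
    by (metis AH_V mprod_assoc tadj_mprod)
  also have "\<dots> = W \<star> A \<star> V"
    by (metis assms(2,3,7) mprod_assoc tadj_mprod)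
  finally have W: "W = W \<star> A \<star> V" .
  have "V = (V \<star> A)\<^sup>H \<star> V"
    by (metis assms(6,8))
  also have "\<dots> = (W \<star> A)\<^sup>H \<star> A\<^sup>H \<star> V\<^sup>H \<star> V"
    by (metis AH_W mprod_assoc tadj_mprod)
  also have "\<dots> = W \<star> A \<star> V"
    by (metis assms(4,6,8) mprod_assoc tadj_mprod)
  finally show ?thesis
    using W by simp
qed

lemma tpinv_Penrose:
  "A \<star> A\<^sup>\<dagger> \<star> A = A \<and> A\<^sup>\<dagger> \<star> A \<star> A\<^sup>\<dagger> = A\<^sup>\<dagger> \<and> (A \<star> A\<^sup>\<dagger>)\<^sup>H = A \<star> A\<^sup>\<dagger> \<and> (A\<^sup>\<dagger> \<star> A)\<^sup>H = A\<^sup>\<dagger> \<star> A"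
proof -
  have "\<forall>k. \<exists>G. tensor_hat M A $ k ** G ** tensor_hat M A $ k = tensor_hat M A $ k
     \<and> G ** tensor_hat M A $ k ** G = G
     \<and> cmat_adj (tensor_hat M A $ k ** G) = tensor_hat M A $ k ** G
     \<and> cmat_adj (G ** tensor_hat M A $ k) = G ** tensor_hat M A $ k"
    using ex_matrix_Moore_Penrose by blast
  then obtain F where F: "\<And>k. tensor_hat M A $ k ** F k ** tensor_hat M A $ k = tensor_hat M A $ k
     \<and> F k ** tensor_hat M A $ k ** F k = F k
     \<and> cmat_adj (tensor_hat M A $ k ** F k) = tensor_hat M A $ k ** F k
     \<and> cmat_adj (F k ** tensor_hat M A $ k) = F k ** tensor_hat M A $ k"
    by metis
  obtain W where W: "tensor_hat M W = (\<chi> k. F k)"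
    using bij_tensor_hat by (metis bij_pointE)
  have W_Penrose: "A \<star> W \<star> A = A \<and> W \<star> A \<star> W = W \<and> (A \<star> W)\<^sup>H = A \<star> W \<and> (W \<star> A)\<^sup>H = W \<star> A"
    by (simp add: tensor_eq_iff_slices tensor_hat_mprod tensor_hat_tadj W F)
  then show ?thesis
    unfolding tpinv_def
  proof (rule theI)
    fix V
    assume "A \<star> V \<star> A = A \<and> V \<star> A \<star> V = V \<and> (A \<star> V)\<^sup>H = A \<star> V \<and> (V \<star> A)\<^sup>H = V \<star> A"
    then show "V = W"
      using W_Penrose Penrose_unique[of A V W] by blast
  qed
qed

lemma mprod_tpinv_inner: "A \<star> A\<^sup>\<dagger> \<star> A = A"
  using tpinv_Penrose by blast

lemma mprod_tpinv_outer: "A\<^sup>\<dagger> \<star> A \<star> A\<^sup>\<dagger> = A\<^sup>\<dagger>"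
  using tpinv_Penrose by blast

lemma tadj_mprod_tpinv: "(A \<star> A\<^sup>\<dagger>)\<^sup>H = A \<star> A\<^sup>\<dagger>"
  using tpinv_Penrose by blast

lemma tadj_tpinv_mprod: "(A\<^sup>\<dagger> \<star> A)\<^sup>H = A\<^sup>\<dagger> \<star> A"
  using tpinv_Penrose by blast

lemma tadj_mprod_tadj_tpinv: "A\<^sup>H \<star> (A\<^sup>\<dagger>)\<^sup>H = A\<^sup>\<dagger> \<star> A"
  by (metis tadj_mprod tadj_tpinv_mprod)

lemma tadj_tpinv_mprod_tadj: "(A\<^sup>\<dagger>)\<^sup>H \<star> A\<^sup>H = A \<star> A\<^sup>\<dagger>"
  by (metis tadj_mprod tadj_mprod_tpinv)

lemma tadj_mprod_mprod_tpinv: "A\<^sup>H \<star> (A \<star> A\<^sup>\<dagger>) = A\<^sup>H"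
  by (metis mprod_tpinv_inner tadj_mprod tadj_mprod_tpinv)

lemma tadj_tpinv_mprod_inner_inverse:
  assumes "A \<star> Am \<star> A = A"
  shows "(A\<^sup>\<dagger>)\<^sup>H \<star> (Am \<star> A) = (A\<^sup>\<dagger>)\<^sup>H"
proof -
  have P: "(A\<^sup>\<dagger>)\<^sup>H = (A\<^sup>\<dagger>)\<^sup>H \<star> (A\<^sup>\<dagger> \<star> A)"
    by (metis mprod_assoc mprod_tpinv_outer tadj_mprod tadj_tpinv_mprod)
  also have "\<dots> = (A\<^sup>\<dagger>)\<^sup>H \<star> (A\<^sup>\<dagger> \<star> A) \<star> (Am \<star> A)"
    by (metis assms mprod_assoc)
  finally show ?thesis
    using P by (metis mprod_assoc)
qed

section \<open>The tensor \<open>A\<^sup>-A A\<^sup>*\<close>\<close>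

lemma inner_inverse_mprod_tadj_equations:
  assumes "A \<star> Am \<star> A = A"
  defines "X \<equiv> Am \<star> A \<star> A\<^sup>H" and "P \<equiv> (A\<^sup>\<dagger>)\<^sup>H"
  shows "X \<star> P \<star> X = X" "P \<star> X \<star> P = P" "A \<star> X = A \<star> A\<^sup>H" "P \<star> X = A \<star> A\<^sup>\<dagger>"
    "X \<star> P = Am \<star> A" "Am \<star> A \<star> X = X"
proof -
  show AX: "A \<star> X = A \<star> A\<^sup>H"
    using assms(1) by (simp add: X_def mprod_assoc[symmetric])
  show XP: "X \<star> P = Am \<star> A"
    using mprod_tpinv_inner[of A]
    by (simp add: X_def P_def mprod_assoc tadj_mprod_tadj_tpinv)
  show PX: "P \<star> X = A \<star> A\<^sup>\<dagger>"
    using tadj_tpinv_mprod_inner_inverse[OF assms(1)]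
    by (simp add: X_def P_def mprod_assoc[symmetric] tadj_tpinv_mprod_tadj)
  show AmAX: "Am \<star> A \<star> X = X"
    using AX by (simp add: X_def mprod_assoc)
  show "X \<star> P \<star> X = X"
    using XP AmAX by simp
  show "P \<star> X \<star> P = P"
    using XP tadj_tpinv_mprod_inner_inverse[OF assms(1)] by (simp add: P_def mprod_assoc)
qed

lemma eq_inner_inverse_mprod_tadjI:
  assumes "Am \<star> A \<star> X = X" "A \<star> X = A \<star> A\<^sup>H"
  shows "X = Am \<star> A \<star> A\<^sup>H"
  using assms by (metis mprod_assoc)

lemma mprod_eq_mprod_tadjI:
  assumes "(A\<^sup>\<dagger>)\<^sup>H \<star> X = A \<star> A\<^sup>\<dagger>"
  shows "A \<star> X = A \<star> A\<^sup>H"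
proof -
  have "A \<star> X = A \<star> (A\<^sup>\<dagger> \<star> A) \<star> X"
    by (metis mprod_assoc mprod_tpinv_inner)
  also have "\<dots> = A \<star> A\<^sup>H \<star> ((A\<^sup>\<dagger>)\<^sup>H \<star> X)"
    by (simp add: tadj_mprod_tadj_tpinv[symmetric] mprod_assoc)
  also have "\<dots> = A \<star> A\<^sup>H"
    by (simp add: assms tadj_mprod_mprod_tpinv mprod_assoc)
  finally show ?thesis .
qed

end

theorem theorem3p11:
  fixes M :: "complex^'n3^'n3"
    and A :: "('n1::finite,'n2::finite,'n3::finite) tensor"
    and Am X :: "('n2,'n1,'n3) tensor"
  assumes "invertible M"
    and "Am \<in> tinner M A"
  defines "P \<equiv> tadj M (tpinv M A)"
  shows
   "(X = mprod M (mprod M Am A) (tadj M A)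
     \<longleftrightarrow> mprod M (mprod M X P) X = X \<and> mprod M (mprod M P X) P = P
         \<and> mprod M A X = mprod M A (tadj M A) \<and> mprod M X P = mprod M Am A)
  \<and> (X = mprod M (mprod M Am A) (tadj M A)
     \<longleftrightarrow> mprod M (mprod M X P) X = X \<and> mprod M (mprod M P X) P = P
         \<and> mprod M P X = mprod M A (tpinv M A) \<and> mprod M X P = mprod M Am A)
  \<and> (X = mprod M (mprod M Am A) (tadj M A)
     \<longleftrightarrow> mprod M (mprod M X P) X = X
         \<and> mprod M P X = mprod M A (tpinv M A) \<and> mprod M X P = mprod M Am A)
  \<and> (X = mprod M (mprod M Am A) (tadj M A)
     \<longleftrightarrow> mprod M (mprod M Am A) X = X \<and> mprod M A X = mprod M A (tadj M A))"
proof -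
  interpret m_product M
    by unfold_locales (fact assms(1))
  have inner: "A \<star> Am \<star> A = A"
    using assms(2) by (simp add: tinner_def)
  note X0 = inner_inverse_mprod_tadj_equations[OF inner]
  have "Am \<star> A \<star> X = X" if "X \<star> P \<star> X = X" "X \<star> P = Am \<star> A"
    using that by simp
  then show ?thesis
    unfolding P_def using X0 eq_inner_inverse_mprod_tadjI mprod_eq_mprod_tadjI by blast
qed

end
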